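(* Let $F\subseteq\mathbf I$ be finite with $\emptyset\notin F$, and set $f=\sum_{\mathbf i\in F}\delta_{s_{\mathbf i}^*}\in\mathcal A$. Then $\|\pi_{\mathcal J}(f)\|=|F|$ (quotient norm in $\mathcal A/\mathcal J$).
   Context: Let $\mathrm{Cu}_2$ be the involutive monoid with identity $e$ and zero element $\lozenge$ (so $\lozenge t=\lozenge=t\lozenge$ for all $t$), generated by $s_1,s_2,s_1^*,s_2^*$ subject to $s_1^*s_1=e=s_2^*s_2$ and $s_1^*s_2=\lozenge=s_2^*s_1$, with involution $t\mapsto t^*$ satisfying $(t^* )^*=t$, $(tu)^*=u^*t^*$. Let $\mathbf I_0=\{\emptyset\}$, $\mathbf I_n=\{1,2\}^n$, $\mathbf I=\bigcup_{n\ge0}\mathbf I_n$ (finite words). For $\mathbf i=(i_1,\dots,i_k)\in\mathbf I$ put $s_{\mathbf i}=s_{i_1}\cdots s_{i_k}$ ($s_\emptyset=e$) and $s_{\mathbf i}^*=(s_{\mathbf i})^*$. Let $\mathcal A=\ell^1(\mathrm{Cu}_2\setminus\{\lozenge\})$ with product $\#$ determined by bilinearity and continuity from $\delta_s\#\delta_t=\delta_{st}$ if $st\neq\lozenge$ and $\delta_s\#\delta_t=0$ if $st=\lozenge$. Let $f_0=\delta_e-\delta_{s_1s_1^*}-\delta_{s_2s_2^*}$, let $\mathcal J$ be the closed two-sided ideal of $\mathcal A$ generated by $f_0$, and let $\pi_{\mathcal J}:\mathcal A\to\mathcal A/\mathcal J$ be the quotient map. *)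

theory Defs
  imports "HOL-Analysis.Analysis"
begin

datatype gen = S1 | S2

text \<open>Every nonzero element of Cu_2 has a unique normal form s_a s_b^* with a, b
  finite words over {1,2}. We represent Cu_2 as 'cu option': None is the zero
  element (lozenge), Some (a, b) stands for s_a s_b^*.\<close>

type_synonym cu = "gen list \<times> gen list"

definition cu_mul :: "cu \<Rightarrow> cu \<Rightarrow> cu option" where
  "cu_mul x y = (case x of (a, b) \<Rightarrow> case y of (c, d) \<Rightarrow>
     if take (length b) c = b then Some (a @ drop (length b) c, d)
     else if take (length c) b = c then Some (a, d @ drop (length c) b)
     else None)"

definition Cu2_mult :: "cu option \<Rightarrow> cu option \<Rightarrow> cu option" where
  "Cu2_mult x y = (case x of None \<Rightarrow> None | Some u \<Rightarrow>
                     (case y of None \<Rightarrow> None | Some v \<Rightarrow> cu_mul u v))"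

definition Cu2_star :: "cu option \<Rightarrow> cu option" where
  "Cu2_star x = map_option (\<lambda>(a, b). (b, a)) x"

definition Cu2_e :: cu where "Cu2_e = ([], [])"

definition s_word :: "gen list \<Rightarrow> cu" where "s_word i = (i, [])"
definition s_word_star :: "gen list \<Rightarrow> cu" where "s_word_star i = ([], i)"

definition l1 :: "(cu \<Rightarrow> complex) set" where
  "l1 = {f. (\<lambda>x. norm (f x)) summable_on UNIV}"

definition l1norm :: "(cu \<Rightarrow> complex) \<Rightarrow> real" where
  "l1norm f = (\<Sum>\<^sub>\<infinity>x. norm (f x))"

definition delta :: "cu \<Rightarrow> cu \<Rightarrow> complex" where
  "delta s = (\<lambda>x. if x = s then 1 else 0)"

definition conv :: "(cu \<Rightarrow> complex) \<Rightarrow> (cu \<Rightarrow> complex) \<Rightarrow> cu \<Rightarrow> complex" where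
  "conv f g u = (\<Sum>\<^sub>\<infinity>(s, t) \<in> {(s, t). cu_mul s t = Some u}. f s * g t)"

definition f0 :: "cu \<Rightarrow> complex" where
  "f0 = (\<lambda>x. delta Cu2_e x - delta ([S1], [S1]) x - delta ([S2], [S2]) x)"

definition l1_closed :: "(cu \<Rightarrow> complex) set \<Rightarrow> bool" where
  "l1_closed I \<longleftrightarrow> (\<forall>g\<in>l1. (\<forall>e>0. \<exists>h\<in>I. l1norm (\<lambda>x. g x - h x) < e) \<longrightarrow> g \<in> I)"

definition closed_ideal :: "(cu \<Rightarrow> complex) set \<Rightarrow> bool" where
  "closed_ideal I \<longleftrightarrow> I \<subseteq> l1 \<and> (\<lambda>_. 0) \<in> I \<and>
     (\<forall>f\<in>I. \<forall>g\<in>I. (\<lambda>x. f x + g x) \<in> I) \<and>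
     (\<forall>c. \<forall>f\<in>I. (\<lambda>x. c * f x) \<in> I) \<and>
     (\<forall>a\<in>l1. \<forall>f\<in>I. conv a f \<in> I \<and> conv f a \<in> I) \<and>
     l1_closed I"

definition J :: "(cu \<Rightarrow> complex) set" where
  "J = \<Inter>{I. closed_ideal I \<and> f0 \<in> I}"

definition quot_norm :: "(cu \<Rightarrow> complex) \<Rightarrow> real" where
  "quot_norm f = Inf {l1norm (\<lambda>x. f x - g x) | g. g \<in> J}"

end

theory Submission
  imports Defs
begin

text \<open>For x, y in Cu_2 consider the functional g \<mapsto> \<Sum> g(u) \<psi>(x u y) (sum over u) on A, where
  \<psi>(s_p s_q^*) = 2^-|p| and \<psi>(\<lozenge>) = 0. These functionals have norm at most 1 and vanish
  on f0, since \<psi>(x y) = \<psi>(x s_1 s_1^* y) + \<psi>(x s_2 s_2^* y). The family is invariant under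
  x \<mapsto> x s and y \<mapsto> t y, so their common kernel is a closed two-sided ideal; it contains f0,
  hence J. For x = y = e the functional takes the value |F| on f, so the quotient norm of f
  is at least |F|, while it is at most the l^1 norm |F| of f.\<close>


section \<open>Associativity of Cu_2\<close>

text \<open>s_a s_b^* acts on words by replacing a prefix b by a. The action is faithful and turns
  products into compositions, which yields associativity of the normal-form product.\<close>

definition cu_act :: "cu \<Rightarrow> gen list \<Rightarrow> gen list option" where
  "cu_act x w = (case x of (a, b) \<Rightarrow>
     if take (length b) w = b then Some (a @ drop (length b) w) else None)"

lemma cu_act_eq_Some_iff: "cu_act x w = Some v \<longleftrightarrow> (\<exists>z. w = snd x @ z \<and> v = fst x @ z)"
  by (auto simp: cu_act_def split: prod.split) (metis append_take_drop_id)

lemma cu_mul_eq_Some_iff: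
  "cu_mul (a, b) (c, d) = Some u \<longleftrightarrow>
     (\<exists>r. c = b @ r \<and> u = (a @ r, d)) \<or> (\<exists>r. b = c @ r \<and> u = (a, d @ r))"
  by (auto simp: cu_mul_def) (metis append_take_drop_id)+

lemma cu_act_cu_mul: "Option.bind (cu_mul x y) (\<lambda>u. cu_act u w) = Option.bind (cu_act y w) (cu_act x)"
proof -
  obtain a b c d where xy: "x = (a, b)" "y = (c, d)" by fastforce
  have "(\<exists>u. cu_mul x y = Some u \<and> cu_act u w = Some v) \<longleftrightarrow>
        (\<exists>z z'. w = d @ z \<and> c @ z = b @ z' \<and> v = a @ z')" for v
  proof
    assume "\<exists>u. cu_mul x y = Some u \<and> cu_act u w = Some v"
    then show "\<exists>z z'. w = d @ z \<and> c @ z = b @ z' \<and> v = a @ z'"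
      unfolding xy cu_mul_eq_Some_iff by (auto simp: cu_act_eq_Some_iff)
  next
    assume "\<exists>z z'. w = d @ z \<and> c @ z = b @ z' \<and> v = a @ z'"
    then obtain z z' where w: "w = d @ z" and cz: "c @ z = b @ z'" and v: "v = a @ z'" by blast
    from cz consider r where "c = b @ r" "z' = r @ z" | r where "b = c @ r" "z = r @ z'"
      by (auto simp: append_eq_append_conv2)
    then show "\<exists>u. cu_mul x y = Some u \<and> cu_act u w = Some v"
    proof cases
      case (1 r)
      then show ?thesis unfolding xy cu_mul_eq_Some_iff
        by (intro exI[of _ "(a @ r, d)"]) (auto simp: cu_act_eq_Some_iff w v)
    next
      case (2 r)
      then show ?thesis unfolding xy cu_mul_eq_Some_iff
        by (intro exI[of _ "(a, d @ r)"]) (auto simp: cu_act_eq_Some_iff w v)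
    qed
  qed
  moreover have "(\<exists>v'. cu_act y w = Some v' \<and> cu_act x v' = Some v) \<longleftrightarrow>
        (\<exists>z z'. w = d @ z \<and> c @ z = b @ z' \<and> v = a @ z')" for v
    by (auto simp: cu_act_eq_Some_iff xy)
  ultimately have "Option.bind (cu_mul x y) (\<lambda>u. cu_act u w) = Some v \<longleftrightarrow>
      Option.bind (cu_act y w) (cu_act x) = Some v" for v
    by (simp add: bind_eq_Some_conv)
  then show ?thesis
    by (cases "Option.bind (cu_act y w) (cu_act x)") (auto intro: ccontr)
qed

fun Cu2_act :: "cu option \<Rightarrow> gen list \<Rightarrow> gen list option" where
  "Cu2_act None = (\<lambda>_. None)"
| "Cu2_act (Some u) = cu_act u"

lemma Cu2_act_eq_bind: "Cu2_act x w = Option.bind x (\<lambda>u. cu_act u w)"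
  by (cases x) simp_all

lemma Cu2_act_mult: "Cu2_act (Cu2_mult x y) = (\<lambda>w. Option.bind (Cu2_act y w) (Cu2_act x))"
  by (cases x; cases y) (simp_all add: fun_eq_iff Cu2_mult_def Cu2_act_eq_bind cu_act_cu_mul)

lemma Cu2_act_inj: "inj Cu2_act"
proof (rule injI)
  fix x y assume act: "Cu2_act x = Cu2_act y"
  have at_snd: "Cu2_act (Some u) (snd u) = Some (fst u)" for u
    by (simp add: cu_act_eq_Some_iff)
  show "x = y"
  proof (cases x; cases y)
    fix u v assume x: "x = Some u" and y: "y = Some v"
    have "cu_act v (snd u) = Some (fst u)" "cu_act u (snd v) = Some (fst v)"
      using at_snd[of u] at_snd[of v] fun_cong[OF act, of "snd u"] fun_cong[OF act, of "snd v"]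
      by (simp_all add: x y)
    then obtain z z' where uv: "snd u = snd v @ z" "fst u = fst v @ z" and vu: "snd v = snd u @ z'"
      unfolding cu_act_eq_Some_iff by blast
    have "snd u = (snd u @ z') @ z" using uv(1) unfolding vu .
    then have "z = []" by simp
    then show "x = y" using uv by (simp add: x y prod_eq_iff)
  next
    fix u assume "x = Some u" "y = None"
    then show "x = y" using at_snd[of u] fun_cong[OF act, of "snd u"] by simp
  next
    fix v assume "x = None" "y = Some v"
    then show "x = y" using at_snd[of v] fun_cong[OF act, of "snd v"] by simp
  qed simp
qed

lemma Cu2_mult_assoc: "Cu2_mult (Cu2_mult x y) z = Cu2_mult x (Cu2_mult y z)"
  by (rule injD[OF Cu2_act_inj]) (simp add: Cu2_act_mult)


section \<open>Pairing l^1 with bounded weights\<close>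

lemma l1_add: "f \<in> l1 \<Longrightarrow> g \<in> l1 \<Longrightarrow> (\<lambda>u. f u + g u) \<in> l1"
  unfolding l1_def
  by (auto intro!: Infinite_Sum.abs_summable_on_comparison_test'[where g = "\<lambda>u. norm (f u) + norm (g u)"]
        summable_on_add norm_triangle_ineq)

lemma l1_cmult: "g \<in> l1 \<Longrightarrow> (\<lambda>u. c * g u) \<in> l1"
  unfolding l1_def by (auto simp: norm_mult intro: summable_on_cmult_right)

lemma l1_diff: "f \<in> l1 \<Longrightarrow> g \<in> l1 \<Longrightarrow> (\<lambda>u. f u - g u) \<in> l1"
  using l1_add[of f "\<lambda>u. (-1) * g u"] l1_cmult[of g "-1"] by simp

lemma l1_finite_support:
  assumes "finite A" "\<And>u. u \<notin> A \<Longrightarrow> g u = 0"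
  shows "g \<in> l1"
proof -
  have "(\<lambda>u. norm (g u)) summable_on A" using assms(1) by simp
  then show ?thesis
    unfolding l1_def mem_Collect_eq
    by (subst (asm) summable_on_cong_neutral[where T = UNIV and g = "\<lambda>u. norm (g u)"])
       (use assms(2) in auto)
qed

definition l1_pairing :: "(cu \<Rightarrow> complex) \<Rightarrow> (cu \<Rightarrow> complex) \<Rightarrow> complex" where
  "l1_pairing w g = (\<Sum>\<^sub>\<infinity>u. g u * w u)"

lemma abs_summable_mult_bounded:
  assumes "g \<in> l1" "\<And>u. norm (w u) \<le> 1"
  shows "(\<lambda>u. norm (g u * w u)) summable_on UNIV"
proof (rule Infinite_Sum.abs_summable_on_comparison_test'[where g = "\<lambda>u. norm (g u)"])
  show "(\<lambda>u. norm (g u)) summable_on UNIV" using assms(1) by (simp add: l1_def)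
  show "norm (g u * w u) \<le> norm (g u)" for u
    using assms(2)[of u] by (simp add: norm_mult mult_left_le)
qed

lemma summable_mult_bounded:
  "g \<in> l1 \<Longrightarrow> (\<And>u. norm (w u) \<le> 1) \<Longrightarrow> (\<lambda>u. g u * w u) summable_on UNIV"
  by (rule abs_summable_summable, rule abs_summable_mult_bounded)

lemma norm_l1_pairing_le:
  assumes "g \<in> l1" "\<And>u. norm (w u) \<le> 1"
  shows "norm (l1_pairing w g) \<le> l1norm g"
proof -
  have "norm (l1_pairing w g) \<le> (\<Sum>\<^sub>\<infinity>u. norm (g u * w u))"
    unfolding l1_pairing_def by (rule norm_infsum_bound, rule abs_summable_mult_bounded[OF assms])
  also have "\<dots> \<le> l1norm g"
    unfolding l1norm_def
    using abs_summable_mult_bounded[OF assms] assms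
    by (intro infsum_mono) (auto simp: l1_def norm_mult mult_left_le)
  finally show ?thesis .
qed

lemma l1_pairing_add:
  "f \<in> l1 \<Longrightarrow> g \<in> l1 \<Longrightarrow> (\<And>u. norm (w u) \<le> 1) \<Longrightarrow>
    l1_pairing w (\<lambda>u. f u + g u) = l1_pairing w f + l1_pairing w g"
  unfolding l1_pairing_def distrib_right by (intro infsum_add summable_mult_bounded)

lemma l1_pairing_cmult: "l1_pairing w (\<lambda>u. c * g u) = c * l1_pairing w g"
  unfolding l1_pairing_def mult.assoc by (rule infsum_cmult_right')

lemma l1_pairing_diff:
  "f \<in> l1 \<Longrightarrow> g \<in> l1 \<Longrightarrow> (\<And>u. norm (w u) \<le> 1) \<Longrightarrow>
    l1_pairing w (\<lambda>u. f u - g u) = l1_pairing w f - l1_pairing w g"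
  using l1_pairing_add[of f "\<lambda>u. (-1) * g u" w] l1_cmult[of g "-1"] l1_pairing_cmult[of w "-1" g]
  by simp

lemma l1_pairing_finite_support:
  assumes "finite A" "\<And>u. u \<notin> A \<Longrightarrow> g u = 0"
  shows "l1_pairing w g = (\<Sum>u\<in>A. g u * w u)"
proof -
  have "l1_pairing w g = (\<Sum>\<^sub>\<infinity>u\<in>A. g u * w u)"
    unfolding l1_pairing_def by (rule infsum_cong_neutral) (use assms(2) in auto)
  then show ?thesis using assms(1) by simp
qed


section \<open>Convolution\<close>

lemma l1_tensor_abs_summable:
  assumes "a \<in> l1" "g \<in> l1"
  shows "(\<lambda>(s, t). norm (a s * g t)) summable_on UNIV"
proof -
  have "((\<lambda>t. norm (a s * g t)) has_sum norm (a s) * l1norm g) UNIV" for s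
    unfolding norm_mult l1norm_def
    by (intro has_sum_cmult_right has_sum_infsum) (use assms(2) in \<open>simp add: l1_def\<close>)
  then have "(\<lambda>(s, t). norm (a s * g t)) summable_on Sigma UNIV (\<lambda>_. UNIV)"
    by (intro summable_on_SigmaI[where g = "\<lambda>s. norm (a s) * l1norm g"])
       (use assms(1) in \<open>auto simp: l1_def intro: summable_on_cmult_left\<close>)
  then show ?thesis by simp
qed

lemma infsum_fibers:
  fixes G :: "'a \<Rightarrow> 'b::banach" and h :: "'a \<Rightarrow> 'c"
  assumes "G summable_on UNIV"
  shows "(\<lambda>c. \<Sum>\<^sub>\<infinity>x\<in>h -` {c}. G x) summable_on UNIV"
    and "(\<Sum>\<^sub>\<infinity>c. \<Sum>\<^sub>\<infinity>x\<in>h -` {c}. G x) = (\<Sum>\<^sub>\<infinity>x. G x)"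
proof -
  let ?S = "Sigma UNIV (\<lambda>c. h -` {c})"
  have inj: "inj_on snd ?S" by (auto intro: inj_onI)
  have img: "snd ` ?S = UNIV" by (auto intro: image_eqI[where x = "(h x, x)" for x])
  have "(\<lambda>(c, x). G x) summable_on ?S"
    using assms summable_on_reindex[OF inj, of G] by (simp add: img o_def case_prod_unfold)
  then show "(\<lambda>c. \<Sum>\<^sub>\<infinity>x\<in>h -` {c}. G x) summable_on UNIV"
    and "(\<Sum>\<^sub>\<infinity>c. \<Sum>\<^sub>\<infinity>x\<in>h -` {c}. G x) = (\<Sum>\<^sub>\<infinity>x. G x)"
    using summable_on_Sigma_banach infsum_Sigma'_banach infsum_reindex[OF inj, of G]
    by (auto simp: img o_def case_prod_unfold)
qed

lemma conv_eq_infsum_fiber: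
  "conv a g u = (\<Sum>\<^sub>\<infinity>st \<in> (\<lambda>(s, t). cu_mul s t) -` {Some u}. a (fst st) * g (snd st))"
  unfolding conv_def by (rule infsum_cong_neutral) auto

lemma conv_in_l1:
  assumes "a \<in> l1" "g \<in> l1"
  shows "conv a g \<in> l1"
proof -
  let ?fiber = "\<lambda>c. (\<lambda>(s, t). cu_mul s t) -` {c}"
  let ?N = "\<lambda>c. \<Sum>\<^sub>\<infinity>st\<in>?fiber c. norm (a (fst st) * g (snd st))"
  have tensor: "(\<lambda>st. norm (a (fst st) * g (snd st))) summable_on UNIV"
    using l1_tensor_abs_summable[OF assms] by (simp add: case_prod_unfold)
  have "?N summable_on range Some"
    by (rule summable_on_subset_banach[OF infsum_fibers(1)[OF tensor]]) simp
  then have "(\<lambda>u. ?N (Some u)) summable_on UNIV"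
    by (simp add: summable_on_reindex o_def)
  moreover have "norm (conv a g u) \<le> ?N (Some u)" for u
    unfolding conv_eq_infsum_fiber
    by (rule norm_infsum_bound, rule summable_on_subset_banach[OF tensor]) simp
  ultimately show ?thesis
    unfolding l1_def mem_Collect_eq by (rule Infinite_Sum.abs_summable_on_comparison_test')
qed

lemma tensor_weighted_summable:
  assumes "a \<in> l1" "g \<in> l1" "\<And>s t. norm (W s t) \<le> 1"
  shows "(\<lambda>(s, t). a s * g t * W s t) summable_on UNIV"
proof (rule abs_summable_summable, rule Infinite_Sum.abs_summable_on_comparison_test')
  show "(\<lambda>(s, t). norm (a s * g t)) summable_on UNIV"
    by (rule l1_tensor_abs_summable[OF assms(1,2)])
  show "norm (case st of (s, t) \<Rightarrow> a s * g t * W s t) \<le> (case st of (s, t) \<Rightarrow> norm (a s * g t))" for st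
    using assms(3) by (auto simp: norm_mult mult_left_le split: prod.split)
qed

lemma l1_pairing_conv:
  assumes "a \<in> l1" "g \<in> l1" "\<And>v. norm (\<omega> v) \<le> 1" "\<omega> None = 0"
  shows "l1_pairing (\<omega> \<circ> Some) (conv a g) =
    (\<Sum>\<^sub>\<infinity>(s, t). a s * g t * \<omega> (Cu2_mult (Some s) (Some t)))"
proof -
  let ?fiber = "\<lambda>c. (\<lambda>(s, t). cu_mul s t) -` {c}"
  let ?P = "\<lambda>st. a (fst st) * g (snd st) * \<omega> (cu_mul (fst st) (snd st))"
  have P: "?P summable_on UNIV"
    using tensor_weighted_summable[OF assms(1,2), of "\<lambda>s t. \<omega> (cu_mul s t)"] assms(3)
    by (simp add: case_prod_unfold)
  have fiber_sum: "(\<Sum>\<^sub>\<infinity>st\<in>?fiber c. ?P st) =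
      (\<Sum>\<^sub>\<infinity>st\<in>?fiber c. a (fst st) * g (snd st)) * \<omega> c" for c
    by (subst infsum_cmult_left'[symmetric]) (rule infsum_cong, auto)
  \<comment> \<open>Group the pairs (s, t) by their product; the fibre over \<lozenge> is killed by \<omega> None = 0.\<close>
  have "l1_pairing (\<omega> \<circ> Some) (conv a g) =
      (\<Sum>\<^sub>\<infinity>u. \<Sum>\<^sub>\<infinity>st\<in>?fiber (Some u). ?P st)"
    unfolding l1_pairing_def by (simp add: fiber_sum conv_eq_infsum_fiber)
  also have "\<dots> = (\<Sum>\<^sub>\<infinity>c. \<Sum>\<^sub>\<infinity>st\<in>?fiber c. ?P st)"
  proof -
    have "(\<Sum>\<^sub>\<infinity>c\<in>range Some. \<Sum>\<^sub>\<infinity>st\<in>?fiber c. ?P st) = (\<Sum>\<^sub>\<infinity>c. \<Sum>\<^sub>\<infinity>st\<in>?fiber c. ?P st)"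
      by (rule infsum_cong_neutral) (auto simp: fiber_sum assms(4) notin_range_Some)
    then show ?thesis by (simp add: infsum_reindex o_def)
  qed
  also have "\<dots> = (\<Sum>\<^sub>\<infinity>st. ?P st)" by (rule infsum_fibers(2)[OF P])
  finally show ?thesis by (simp add: Cu2_mult_def case_prod_unfold)
qed

lemma l1_pairing_conv_left:
  assumes "a \<in> l1" "g \<in> l1" "\<And>v. norm (\<omega> v) \<le> 1" "\<omega> None = 0"
  shows "l1_pairing (\<omega> \<circ> Some) (conv a g) =
    (\<Sum>\<^sub>\<infinity>s. a s * l1_pairing (\<lambda>t. \<omega> (Cu2_mult (Some s) (Some t))) g)"
proof -
  let ?H = "\<lambda>s t. a s * g t * \<omega> (Cu2_mult (Some s) (Some t))"
  have "(\<lambda>(s, t). ?H s t) summable_on UNIV \<times> UNIV"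
    using tensor_weighted_summable[OF assms(1,2)] assms(3) by simp
  then have "(\<Sum>\<^sub>\<infinity>(s, t). ?H s t) = (\<Sum>\<^sub>\<infinity>s. \<Sum>\<^sub>\<infinity>t. ?H s t)"
    using infsum_Sigma'_banach[of ?H UNIV "\<lambda>_. UNIV"] by simp
  also have "\<dots> = (\<Sum>\<^sub>\<infinity>s. a s * l1_pairing (\<lambda>t. \<omega> (Cu2_mult (Some s) (Some t))) g)"
    unfolding l1_pairing_def infsum_cmult_right'[symmetric] by (simp add: mult.assoc)
  finally show ?thesis using l1_pairing_conv[where \<omega> = \<omega>, OF assms] by simp
qed

lemma l1_pairing_conv_right:
  assumes "a \<in> l1" "g \<in> l1" "\<And>v. norm (\<omega> v) \<le> 1" "\<omega> None = 0"
  shows "l1_pairing (\<omega> \<circ> Some) (conv a g) =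
    (\<Sum>\<^sub>\<infinity>t. g t * l1_pairing (\<lambda>s. \<omega> (Cu2_mult (Some s) (Some t))) a)"
proof -
  let ?H = "\<lambda>s t. a s * g t * \<omega> (Cu2_mult (Some s) (Some t))"
  have H: "(\<lambda>(s, t). ?H s t) summable_on UNIV \<times> UNIV"
    using tensor_weighted_summable[OF assms(1,2)] assms(3) by simp
  then have "(\<Sum>\<^sub>\<infinity>(s, t). ?H s t) = (\<Sum>\<^sub>\<infinity>s. \<Sum>\<^sub>\<infinity>t. ?H s t)"
    using infsum_Sigma'_banach[of ?H UNIV "\<lambda>_. UNIV"] by simp
  also have "\<dots> = (\<Sum>\<^sub>\<infinity>t. \<Sum>\<^sub>\<infinity>s. ?H s t)"
    by (rule infsum_swap_banach[OF H])
  also have "\<dots> = (\<Sum>\<^sub>\<infinity>t. g t * l1_pairing (\<lambda>s. \<omega> (Cu2_mult (Some s) (Some t))) a)"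
    unfolding l1_pairing_def infsum_cmult_right'[symmetric] by (simp add: algebra_simps)
  finally show ?thesis using l1_pairing_conv[where \<omega> = \<omega>, OF assms] by simp
qed


section \<open>The ideal of common zeros of the \<psi>-functionals\<close>

lemma Cu2_mult_unit_right [simp]: "Cu2_mult x (Some Cu2_e) = x"
  by (cases x) (auto simp: Cu2_mult_def cu_mul_def Cu2_e_def)

lemma Cu2_mult_unit_left [simp]: "Cu2_mult (Some Cu2_e) x = x"
  by (cases x) (auto simp: Cu2_mult_def cu_mul_def Cu2_e_def)

fun psi :: "cu option \<Rightarrow> real" where
  "psi None = 0"
| "psi (Some (p, q)) = (1 / 2) ^ length p"

lemma psi_split:
  "psi (Cu2_mult x y) = psi (Cu2_mult (Cu2_mult x (Some ([S1], [S1]))) y)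
                      + psi (Cu2_mult (Cu2_mult x (Some ([S2], [S2]))) y)"
proof (cases "x = None \<or> y = None")
  case False
  then obtain p q r t where x: "x = Some (p, q)" and y: "y = Some (r, t)"
    by (metis not_None_eq surj_pair)
  show ?thesis
  proof (cases q)
    case (Cons j q')
    then show ?thesis by (cases j) (auto simp: x Cu2_mult_def cu_mul_def)
  next
    case Nil
    show ?thesis
    proof (cases r)
      case (Cons j r')
      then show ?thesis unfolding Cu2_mult_assoc
        by (cases j) (auto simp: x y Nil Cu2_mult_def cu_mul_def)
    qed (simp add: x y Nil Cu2_mult_def cu_mul_def)
  qed
qed (auto simp: Cu2_mult_def split: option.split)

definition psi_weight :: "cu option \<Rightarrow> cu option \<Rightarrow> cu option \<Rightarrow> complex" where
  "psi_weight x y v = of_real (psi (Cu2_mult (Cu2_mult x v) y))"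

lemma norm_psi_weight_le: "norm (psi_weight x y v) \<le> 1"
proof -
  have "0 \<le> psi z \<and> psi z \<le> 1" for z
    by (cases z rule: psi.cases) (auto simp: power_le_one)
  then show ?thesis by (simp add: psi_weight_def)
qed

lemma psi_weight_None [simp]: "psi_weight x y None = 0"
  by (simp add: psi_weight_def Cu2_mult_def split: option.split)

lemma psi_weight_mult:
  "psi_weight x y (Cu2_mult v v') = psi_weight (Cu2_mult x v) y v'"
  "psi_weight x y (Cu2_mult v v') = psi_weight x (Cu2_mult v' y) v"
  by (simp_all add: psi_weight_def Cu2_mult_assoc)

definition psi_kernel :: "(cu \<Rightarrow> complex) set" where
  "psi_kernel = {g \<in> l1. \<forall>x y. l1_pairing (psi_weight x y \<circ> Some) g = 0}"

lemma conv_mem_psi_kernel_left: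
  assumes "a \<in> l1" "g \<in> psi_kernel"
  shows "conv a g \<in> psi_kernel"
proof -
  have g: "g \<in> l1" using assms(2) by (simp add: psi_kernel_def)
  have "l1_pairing (psi_weight x y \<circ> Some) (conv a g) = 0" for x y
    using assms(2)
    unfolding l1_pairing_conv_left[where \<omega> = "psi_weight x y", OF assms(1) g norm_psi_weight_le psi_weight_None]
    by (simp add: psi_weight_mult(1) psi_kernel_def comp_def)
  then show ?thesis using conv_in_l1[OF assms(1) g] by (simp add: psi_kernel_def)
qed

lemma conv_mem_psi_kernel_right:
  assumes "g \<in> psi_kernel" "a \<in> l1"
  shows "conv g a \<in> psi_kernel"
proof -
  have g: "g \<in> l1" using assms(1) by (simp add: psi_kernel_def)
  have "l1_pairing (psi_weight x y \<circ> Some) (conv g a) = 0" for x y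
    using assms(1)
    unfolding l1_pairing_conv_right[where \<omega> = "psi_weight x y", OF g assms(2) norm_psi_weight_le psi_weight_None]
    by (simp add: psi_weight_mult(2) psi_kernel_def comp_def)
  then show ?thesis using conv_in_l1[OF g assms(2)] by (simp add: psi_kernel_def)
qed

lemma l1_closed_psi_kernel: "l1_closed psi_kernel"
  unfolding l1_closed_def
proof (intro ballI impI)
  fix g assume g: "g \<in> l1" and approx: "\<forall>e>0. \<exists>h\<in>psi_kernel. l1norm (\<lambda>u. g u - h u) < e"
  have "l1_pairing (psi_weight x y \<circ> Some) g = 0" for x y
  proof (rule ccontr)
    let ?w = "psi_weight x y \<circ> Some"
    assume "l1_pairing ?w g \<noteq> 0"
    then obtain h where h: "h \<in> psi_kernel" "l1norm (\<lambda>u. g u - h u) < norm (l1_pairing ?w g)"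
      using approx by (meson zero_less_norm_iff)
    then have "h \<in> l1" "l1_pairing ?w h = 0" by (auto simp: psi_kernel_def)
    then have "l1_pairing ?w (\<lambda>u. g u - h u) = l1_pairing ?w g"
      using l1_pairing_diff[OF g, of h ?w] norm_psi_weight_le by simp
    then show False
      using norm_l1_pairing_le[OF l1_diff[OF g \<open>h \<in> l1\<close>], of ?w] norm_psi_weight_le h(2)
      by simp
  qed
  then show "g \<in> psi_kernel" using g by (simp add: psi_kernel_def)
qed

lemma closed_ideal_psi_kernel: "closed_ideal psi_kernel"
  unfolding closed_ideal_def
  using l1_add l1_cmult l1_pairing_add l1_pairing_cmult norm_psi_weight_le
    conv_mem_psi_kernel_left conv_mem_psi_kernel_right l1_closed_psi_kernel
  by (auto simp: psi_kernel_def l1_def l1_pairing_def)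

lemma f0_mem_psi_kernel: "f0 \<in> psi_kernel"
proof -
  let ?A = "{Cu2_e, ([S1], [S1]), ([S2], [S2])}"
  have supp: "f0 u = 0" if "u \<notin> ?A" for u
    using that by (simp add: f0_def delta_def)
  have "l1_pairing (psi_weight x y \<circ> Some) f0 = (\<Sum>u\<in>?A. f0 u * (psi_weight x y \<circ> Some) u)" for x y
    by (rule l1_pairing_finite_support) (simp_all add: supp)
  also have "\<dots> x y = psi_weight x y (Some Cu2_e)
      - psi_weight x y (Some ([S1], [S1])) - psi_weight x y (Some ([S2], [S2]))" for x y
    by (simp add: f0_def delta_def Cu2_e_def)
  also have "\<dots> x y = 0" for x y
    by (simp add: psi_weight_def psi_split[of x y])
  finally have "l1_pairing (psi_weight x y \<circ> Some) f0 = 0" for x y .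
  moreover have "f0 \<in> l1" by (rule l1_finite_support[of ?A]) (simp_all add: supp)
  ultimately show ?thesis by (simp add: psi_kernel_def)
qed

lemma J_subset_psi_kernel: "J \<subseteq> psi_kernel"
  unfolding J_def using closed_ideal_psi_kernel f0_mem_psi_kernel by blast


section \<open>The quotient norm\<close>

lemma zero_mem_J: "(\<lambda>_. 0) \<in> J"
  unfolding J_def closed_ideal_def by blast

lemma quot_norm_le_l1norm: "quot_norm f \<le> l1norm f"
  unfolding quot_norm_def
proof (rule cInf_lower)
  show "l1norm f \<in> {l1norm (\<lambda>x. f x - g x) |g. g \<in> J}"
    using zero_mem_J by force
  show "bdd_below {l1norm (\<lambda>x. f x - g x) |g. g \<in> J}"
    by (rule bdd_belowI[of _ 0]) (auto simp: l1norm_def intro: infsum_nonneg)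
qed

lemma norm_l1_pairing_le_quot_norm:
  assumes "f \<in> l1" "\<And>u. norm (w u) \<le> 1" "J \<subseteq> {g \<in> l1. l1_pairing w g = 0}"
  shows "norm (l1_pairing w f) \<le> quot_norm f"
  unfolding quot_norm_def
proof (rule cInf_greatest)
  show "{l1norm (\<lambda>x. f x - g x) |g. g \<in> J} \<noteq> {}"
    using zero_mem_J by blast
  fix r assume "r \<in> {l1norm (\<lambda>x. f x - g x) |g. g \<in> J}"
  then obtain g where g: "g \<in> l1" "l1_pairing w g = 0" and r: "r = l1norm (\<lambda>x. f x - g x)"
    using assms(3) by blast
  have "l1_pairing w f = l1_pairing w (\<lambda>x. f x - g x)"
    using l1_pairing_diff[OF assms(1) g(1) assms(2)] g(2) by simp
  then show "norm (l1_pairing w f) \<le> r"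
    using norm_l1_pairing_le[OF l1_diff[OF assms(1) g(1)] assms(2)] r by simp
qed

lemma sum_delta_eq_indicator:
  assumes "finite F" "inj_on h F"
  shows "(\<lambda>x. \<Sum>i\<in>F. delta (h i) x) = indicator (h ` F)"
proof
  fix x
  have "(\<Sum>i\<in>F. delta (h i) x) = (\<Sum>s\<in>h ` F. delta s x)"
    using sum.reindex[OF assms(2), of "\<lambda>s. delta s x"] by simp
  also have "\<dots> = indicator (h ` F) x"
    using assms(1) by (simp add: delta_def indicator_def)
  finally show "(\<Sum>i\<in>F. delta (h i) x) = indicator (h ` F) x" .
qed

lemma indicator_in_l1: "finite A \<Longrightarrow> indicator A \<in> l1"
  by (rule l1_finite_support) auto

lemma l1norm_indicator:
  assumes "finite A"
  shows "l1norm (indicator A) = card A"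
proof -
  have "l1norm (indicator A) = (\<Sum>\<^sub>\<infinity>u\<in>A. norm (indicator A u :: complex))"
    unfolding l1norm_def by (rule infsum_cong_neutral) auto
  then show ?thesis using assms by simp
qed

lemma l1_pairing_indicator: "finite A \<Longrightarrow> l1_pairing w (indicator A) = (\<Sum>u\<in>A. w u)"
  by (subst l1_pairing_finite_support[of A]) auto

theorem proposition3p19:
  fixes F :: "gen list set"
  assumes "finite F" and "[] \<notin> F"
  shows "quot_norm (\<lambda>x. \<Sum>i\<in>F. delta (s_word_star i) x) = real (card F)"
proof -
  let ?A = "s_word_star ` F"
  let ?w = "psi_weight (Some Cu2_e) (Some Cu2_e) \<circ> Some"
  have inj: "inj_on s_word_star F" by (simp add: inj_on_def s_word_star_def)
  have A: "finite ?A" "card ?A = card F"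
    using assms(1) by (simp_all add: card_image[OF inj])
  have "l1_pairing ?w (indicator ?A) = card F"
    using A(1) by (simp add: l1_pairing_indicator psi_weight_def s_word_star_def sum.reindex inj_on_def)
  moreover have "J \<subseteq> {g \<in> l1. l1_pairing ?w g = 0}"
    using J_subset_psi_kernel by (auto simp: psi_kernel_def)
  then have "norm (l1_pairing ?w (indicator ?A)) \<le> quot_norm (indicator ?A)"
    using indicator_in_l1[OF A(1)] by (intro norm_l1_pairing_le_quot_norm) (simp_all add: norm_psi_weight_le)
  ultimately have "real (card F) \<le> quot_norm (indicator ?A)" by simp
  moreover have "quot_norm (indicator ?A) \<le> real (card F)"
    using quot_norm_le_l1norm l1norm_indicator A by metis
  ultimately show ?thesis
    by (simp add: sum_delta_eq_indicator[OF assms(1) inj])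
qed

end
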